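(* Let $S\in\{0,1\}$ be an endogenous binary selection indicator (with $S=1$ meaning the unit is included and its label $Y$ observed), let $Z\subseteq V$ be a set of endogenous variables, and let $(d,\theta)$, $(d',\theta')$ be values of the inputs. Suppose $Y\perp\!\!\!\perp\{D,\Theta,S\}\mid X,Z$ and $\mathbb{P}(X,Z\mid\mathrm{do}(D=d,\Theta=\theta))\ll\mathbb{P}(X,Z\mid S=1,\mathrm{do}(D=d',\Theta=\theta'))$. Then $\mathbb{E}[Y\mid X,\mathrm{do}(D=d,\Theta=\theta)]$ is identifiable in $\mathcal{M}$ from $\{\mathbb{P}(X,Y,Z\mid S=1,\mathrm{do}(D=d',\Theta=\theta')),\ \mathbb{P}(X,Z\mid\mathrm{do}(D=d,\Theta=\theta))\}$, and $$\mathbb{E}[Y\mid X,\mathrm{do}(D=d,\Theta=\theta)]=\mathbb{E}\big[\mathbb{E}[Y\mid X,Z,S=1]\,\big|\,X,\mathrm{do}(D=d,\Theta=\theta)\big]$$ holds $\mathbb{P}(X\mid\mathrm{do}(D=d,\Theta=\theta))$-almost everywhere.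
   Context: Setting: all variables take values in subsets of Euclidean spaces with Borel $\sigma$-algebras. Variables: features $X$, target $Y$ (real-valued), prediction $\hat{Y}$, and two input (non-random, externally set) variables: a domain indicator $D\in\{0,1\}$ (deployment of a decision support system) and parameters $\Theta$. A structural causal model (SCM) with input variables $\{D,\Theta\}$ induces, for every value $(d,\theta)$, a distribution $\mathbb{P}(\cdot\mid\mathrm{do}(D=d,\Theta=\theta))$ on the endogenous variables (push-forward of independent exogenous distributions through the structural equations). The class $\mathcal{M}$: the set of SCMs with endogenous variables $V\supseteq\{X,\hat{Y},Y\}$, input variables $\{D,\Theta\}$, and graph $G$ such that the parents of $\hat{Y}$ are exactly $\{X,\Theta\}$, the children of $D$ equal the children of $\hat{Y}$, and the latent projection of $G$ onto $\{X,\hat{Y},Y,D,\Theta\}$ is a subgraph of the acyclic directed mixed graph with edges $X\to\hat{Y}$, $\Theta\to\hat{Y}$, $X\to Y$, $\hat{Y}\to Y$, $D\to Y$, $X\leftrightarrow Y$. Identifiability: a target quantity $t(M)$ is identifiable in $\mathcal{M}$ from a set $s(M)$ of distributions induced by $M$ if $s(M_1)=s(M_2)\implies t(M_1)=t(M_2)$ for all $M_1,M_2\in\mathcal{M}$. The conditional independence $Y\perp\!\!\!\perp\{D,\Theta,S\}\mid X,Z$ is meant in the transitional sense (implied by d-separation in the graph). $\ll$ denotes absolute continuity. *)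

theory Defs
  imports "HOL-Probability.Probability"
begin

text \<open>Every variable takes values in (a subset of) some R^k. To have a single type for
all variables, R^k is embedded into real sequences (nat => real) as the sequences
vanishing from index k on; the product sigma-algebra on nat => real induces the Borel
sigma-algebra of R^k on that copy.\<close>

type_synonym vec = "nat \<Rightarrow> real"

definition vspace :: "vec measure" where
  "vspace = PiM UNIV (\<lambda>_. (borel :: real measure))"

definition euc :: "nat \<Rightarrow> vec set" where
  "euc k = {u. \<forall>i\<ge>k. u i = 0}"

definition enc :: "real \<Rightarrow> vec" where
  "enc r = (\<lambda>i. if i = 0 then r else 0)"

datatype inp = InD | InTh

datatype 'v node = Endo 'v | Inp inp | Exo nat

record 'v scm =
  endo :: "'v set"
  exo  :: "nat set"
  dimv :: "'v \<Rightarrow> nat"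
  pa   :: "'v \<Rightarrow> 'v node set"
  fn   :: "'v \<Rightarrow> ('v node \<Rightarrow> vec) \<Rightarrow> vec"
  pexo :: "nat \<Rightarrow> vec measure"

definition edges :: "'v scm \<Rightarrow> ('v node \<times> 'v node) set" where
  "edges M = {(p, Endo v) | p v. v \<in> endo M \<and> p \<in> pa M v}"

definition wf_scm :: "'v scm \<Rightarrow> bool" where
  "wf_scm M \<longleftrightarrow>
     finite (endo M) \<and> finite (exo M) \<and>
     (\<forall>v\<in>endo M. pa M v \<subseteq> Endo ` endo M \<union> range Inp \<union> Exo ` exo M) \<and>
     acyclic (edges M) \<and>
     (\<forall>v\<in>endo M. fn M v \<in> measurable (PiM (pa M v) (\<lambda>_. vspace)) vspace) \<and>
     (\<forall>v\<in>endo M. \<forall>a. fn M v a = fn M v (restrict a (pa M v))) \<and>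
     (\<forall>v\<in>endo M. \<forall>a. fn M v a \<in> euc (dimv M v)) \<and>
     (\<forall>e\<in>exo M. prob_space (pexo M e) \<and> sets (pexo M e) = sets vspace \<and>
                 (\<exists>k. emeasure (pexo M e) (euc k) = 1))"

definition asg :: "real \<Rightarrow> vec \<Rightarrow> (nat \<Rightarrow> vec) \<Rightarrow> ('v \<Rightarrow> vec) \<Rightarrow> 'v node \<Rightarrow> vec" where
  "asg d th u s n = (case n of Endo v \<Rightarrow> s v | Inp InD \<Rightarrow> enc d | Inp InTh \<Rightarrow> th | Exo e \<Rightarrow> u e)"

text \<open>The (unique, by acyclicity) solution of the structural equations.\<close>
definition sol :: "'v scm \<Rightarrow> real \<Rightarrow> vec \<Rightarrow> (nat \<Rightarrow> vec) \<Rightarrow> 'v \<Rightarrow> vec" where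
  "sol M d th u = (THE s. s \<in> extensional (endo M) \<and>
                          (\<forall>v\<in>endo M. s v = fn M v (asg d th u s)))"

text \<open>P( . | do(D=d, Theta=th)): push-forward of the independent exogenous
distributions through the structural equations.\<close>
definition Pdo :: "'v scm \<Rightarrow> real \<Rightarrow> vec \<Rightarrow> ('v \<Rightarrow> vec) measure" where
  "Pdo M d th = distr (PiM (exo M) (pexo M)) (PiM (endo M) (\<lambda>_. vspace)) (sol M d th)"

definition Psel :: "'v scm \<Rightarrow> 'v \<Rightarrow> real \<Rightarrow> vec \<Rightarrow> ('v \<Rightarrow> vec) measure" where
  "Psel M S d th = uniform_measure (Pdo M d th) {\<omega> \<in> space (Pdo M d th). \<omega> S = enc 1}"

text \<open>Directed paths of length >= 1 all of whose intermediate nodes lie in L.\<close>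
definition via :: "('a \<times> 'a) set \<Rightarrow> 'a set \<Rightarrow> ('a \<times> 'a) set" where
  "via E L = {(x, y). (x, y) \<in> E \<and> y \<in> L}\<^sup>* O E"

definition obsnodes :: "'v \<Rightarrow> 'v \<Rightarrow> 'v \<Rightarrow> 'v node set" where
  "obsnodes X Yh Y = {Endo X, Endo Yh, Endo Y, Inp InD, Inp InTh}"

text \<open>Latent projection onto O (all other nodes, endogenous and exogenous, latent).\<close>
definition proj_dir :: "'v scm \<Rightarrow> 'v node set \<Rightarrow> 'v node \<Rightarrow> 'v node \<Rightarrow> bool" where
  "proj_dir M Ob a b \<longleftrightarrow> a \<in> Ob \<and> b \<in> Ob \<and> (a, b) \<in> via (edges M) (- Ob)"

definition proj_bidir :: "'v scm \<Rightarrow> 'v node set \<Rightarrow> 'v node \<Rightarrow> 'v node \<Rightarrow> bool" where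
  "proj_bidir M Ob a b \<longleftrightarrow> a \<in> Ob \<and> b \<in> Ob \<and> a \<noteq> b \<and>
     (\<exists>c. c \<notin> Ob \<and> (c, a) \<in> via (edges M) (- Ob) \<and> (c, b) \<in> via (edges M) (- Ob))"

definition in_class :: "'v \<Rightarrow> 'v \<Rightarrow> 'v \<Rightarrow> 'v scm \<Rightarrow> bool" where
  "in_class X Yh Y M \<longleftrightarrow>
     wf_scm M \<and> X \<in> endo M \<and> Yh \<in> endo M \<and> Y \<in> endo M \<and>
     X \<noteq> Yh \<and> X \<noteq> Y \<and> Yh \<noteq> Y \<and> dimv M Y = 1 \<and>
     pa M Yh - range Exo = {Endo X, Inp InTh} \<and>
     {v \<in> endo M. Inp InD \<in> pa M v} = {v \<in> endo M. Endo Yh \<in> pa M v} \<and>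
     (\<forall>a b. proj_dir M (obsnodes X Yh Y) a b \<longrightarrow>
        (a, b) \<in> {(Endo X, Endo Yh), (Inp InTh, Endo Yh), (Endo X, Endo Y),
                  (Endo Yh, Endo Y), (Inp InD, Endo Y)}) \<and>
     (\<forall>a b. proj_bidir M (obsnodes X Yh Y) a b \<longrightarrow> {a, b} = {Endo X, Endo Y})"

definition sel_setup :: "'v \<Rightarrow> 'v set \<Rightarrow> 'v scm \<Rightarrow> bool" where
  "sel_setup S Z M \<longleftrightarrow> S \<in> endo M \<and> Z \<subseteq> endo M \<and>
     (\<forall>a. fn M S a \<in> {enc 0, enc 1})"

definition XZspace :: "'v set \<Rightarrow> (vec \<times> ('v \<Rightarrow> vec)) measure" where
  "XZspace Z = vspace \<Otimes>\<^sub>M PiM Z (\<lambda>_. vspace)"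

definition XZSspace :: "'v set \<Rightarrow> (vec \<times> ('v \<Rightarrow> vec) \<times> vec) measure" where
  "XZSspace Z = vspace \<Otimes>\<^sub>M (PiM Z (\<lambda>_. vspace) \<Otimes>\<^sub>M vspace)"

definition XYZspace :: "'v set \<Rightarrow> (vec \<times> real \<times> ('v \<Rightarrow> vec)) measure" where
  "XYZspace Z = vspace \<Otimes>\<^sub>M (borel \<Otimes>\<^sub>M PiM Z (\<lambda>_. vspace))"

text \<open>There is a Markov kernel Q(Y | X, Z) such that for all input values
P(Y, X, Z, S | do(d, th)) = Q(Y | X, Z) (x) P(X, Z, S | do(d, th)).\<close>
definition trans_ci :: "'v scm \<Rightarrow> vec set \<Rightarrow> 'v \<Rightarrow> 'v \<Rightarrow> 'v \<Rightarrow> 'v set \<Rightarrow> bool" where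
  "trans_ci M Th X Y S Z \<longleftrightarrow>
     (\<exists>Q. Q \<in> measurable (XZspace Z) (prob_algebra (borel :: real measure)) \<and>
       (\<forall>d\<in>{0, 1}. \<forall>th\<in>Th. \<forall>A\<in>sets borel. \<forall>B\<in>sets (XZSspace Z).
          emeasure (Pdo M d th)
            {\<omega> \<in> space (Pdo M d th). \<omega> Y 0 \<in> A \<and> (\<omega> X, restrict \<omega> Z, \<omega> S) \<in> B}
          = (\<integral>\<^sup>+ \<omega>. indicator B (\<omega> X, restrict \<omega> Z, \<omega> S) *
                     emeasure (Q (\<omega> X, restrict \<omega> Z)) A \<partial>Pdo M d th)))"

text \<open>h is a version of E[Yf | W] under P (h as a function of the value of W).\<close>
definition is_cexp :: "'a measure \<Rightarrow> ('a \<Rightarrow> 'b) \<Rightarrow> 'b measure \<Rightarrow> ('a \<Rightarrow> real) \<Rightarrow> ('b \<Rightarrow> real) \<Rightarrow> bool" where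
  "is_cexp P W N Yf h \<longleftrightarrow>
     W \<in> measurable P N \<and> h \<in> borel_measurable N \<and>
     integrable P Yf \<and> integrable P (\<lambda>\<omega>. h (W \<omega>)) \<and>
     (\<forall>A\<in>sets N. set_lebesgue_integral P (W -` A \<inter> space P) Yf
                 = set_lebesgue_integral P (W -` A \<inter> space P) (\<lambda>\<omega>. h (W \<omega>)))"

definition hyps :: "vec set \<Rightarrow> 'v \<Rightarrow> 'v \<Rightarrow> 'v \<Rightarrow> 'v \<Rightarrow> 'v set \<Rightarrow>
                    real \<Rightarrow> vec \<Rightarrow> real \<Rightarrow> vec \<Rightarrow> 'v scm \<Rightarrow> bool" where
  "hyps Th X Yh Y S Z d th d' th' M \<longleftrightarrow>
     in_class X Yh Y M \<and> sel_setup S Z M \<and> trans_ci M Th X Y S Z \<and>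
     absolutely_continuous
       (distr (Psel M S d' th') (XZspace Z) (\<lambda>\<omega>. (\<omega> X, restrict \<omega> Z)))
       (distr (Pdo M d th) (XZspace Z) (\<lambda>\<omega>. (\<omega> X, restrict \<omega> Z)))"

definition obs :: "'v \<Rightarrow> 'v \<Rightarrow> 'v \<Rightarrow> 'v set \<Rightarrow> real \<Rightarrow> vec \<Rightarrow> real \<Rightarrow> vec \<Rightarrow> 'v scm \<Rightarrow>
     (vec \<times> real \<times> ('v \<Rightarrow> vec)) measure \<times> (vec \<times> ('v \<Rightarrow> vec)) measure" where
  "obs X Y S Z d th d' th' M =
     (distr (Psel M S d' th') (XYZspace Z) (\<lambda>\<omega>. (\<omega> X, \<omega> Y 0, restrict \<omega> Z)),
      distr (Pdo M d th) (XZspace Z) (\<lambda>\<omega>. (\<omega> X, restrict \<omega> Z)))"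

end

theory Submission
  imports Defs
begin

text \<open>The transitional independence of Y from (D, Theta, S) given (X, Z) provides one Markov
kernel Q(Y | X, Z) serving every regime, both interventional and selected. Its mean m(x, z) is a
version of E[Y | X, Z] under the selected regime, so it coincides with the observed regression
E[Y | X, Z, S = 1] almost everywhere w.r.t. the selected law of (X, Z); absolute continuity carries
this to the interventional law of (X, Z). Since m is also a version of E[Y | X, Z] under
do(D = d, Theta = theta), the tower property gives the adjustment formula. For identifiability,
two models with the same observed laws have kernels whose means agree almost everywhere (both
are determined by the common law of (X, Y, Z) given S = 1), hence the same integrals of Y over
the events {X in A}.\<close>

definition is_cond_distr ::
    "'a measure \<Rightarrow> 'b measure \<Rightarrow> ('a \<Rightarrow> 'b) \<Rightarrow> ('a \<Rightarrow> real) \<Rightarrow> ('b \<Rightarrow> real measure) \<Rightarrow> bool" where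
  "is_cond_distr P N W V Q \<longleftrightarrow> Q \<in> measurable N (subprob_algebra borel) \<and>
     (\<forall>A\<in>sets borel. \<forall>B\<in>sets N.
        emeasure P {\<omega>\<in>space P. V \<omega> \<in> A \<and> W \<omega> \<in> B}
        = (\<integral>\<^sup>+\<omega>. indicator B (W \<omega>) * emeasure (Q (W \<omega>)) A \<partial>P))"

lemma is_cond_distr_distr_density_eq_bind:
  assumes cd: "is_cond_distr P N W V Q"
    and W: "W \<in> measurable P N" and V: "V \<in> borel_measurable P" and B: "B \<in> sets N"
    and nonempty: "space P \<noteq> {}"
  defines "PB \<equiv> density P (\<lambda>\<omega>. indicator B (W \<omega>))"
  shows "distr PB borel V = PB \<bind> (\<lambda>\<omega>. Q (W \<omega>))"
proof (rule measure_eqI)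
  have Q: "Q \<in> measurable N (subprob_algebra borel)" using cd by (simp add: is_cond_distr_def)
  have QW: "(\<lambda>\<omega>. Q (W \<omega>)) \<in> measurable PB (subprob_algebra borel)"
    unfolding PB_def using measurable_compose[OF W Q] by simp
  have IB: "(\<lambda>\<omega>. indicator B (W \<omega>)) \<in> borel_measurable P" using W B by measurable
  show "sets (distr PB borel V) = sets (PB \<bind> (\<lambda>\<omega>. Q (W \<omega>)))"
    using nonempty sets_kernel[OF QW] by (subst sets_bind[where N=borel]) (auto simp: PB_def)
  fix A assume "A \<in> sets (distr PB borel V)"
  then have A: "A \<in> sets borel" by simp
  have E: "{\<omega>\<in>space P. V \<omega> \<in> A \<and> W \<omega> \<in> B} \<in> sets P" using A B V W by measurable
  have "emeasure (distr PB borel V) A = (\<integral>\<^sup>+\<omega>. indicator B (W \<omega>) * indicator A (V \<omega>) \<partial>P)"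
    using A V unfolding PB_def
    by (simp add: emeasure_distr emeasure_density[OF IB measurable_sets[OF V A]])
       (auto intro!: nn_integral_cong split: split_indicator)
  also have "\<dots> = emeasure P {\<omega>\<in>space P. V \<omega> \<in> A \<and> W \<omega> \<in> B}"
    unfolding nn_integral_indicator[OF E, symmetric]
    by (auto intro!: nn_integral_cong split: split_indicator)
  also have "\<dots> = (\<integral>\<^sup>+\<omega>. indicator B (W \<omega>) * emeasure (Q (W \<omega>)) A \<partial>P)"
    using cd A B by (simp add: is_cond_distr_def)
  also have "\<dots> = (\<integral>\<^sup>+\<omega>. emeasure (Q (W \<omega>)) A \<partial>PB)"
    unfolding PB_def using measurable_emeasure_kernel[OF measurable_compose[OF W Q] A]
    by (simp add: nn_integral_density[OF IB])
  also have "\<dots> = emeasure (PB \<bind> (\<lambda>\<omega>. Q (W \<omega>))) A"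
    using nonempty by (intro emeasure_bind[OF _ QW A, symmetric]) (simp add: PB_def)
  finally show "emeasure (distr PB borel V) A = emeasure (PB \<bind> (\<lambda>\<omega>. Q (W \<omega>))) A" .
qed

lemma is_cond_distr_nn_integral:
  assumes cd: "is_cond_distr P N W V Q"
    and W: "W \<in> measurable P N" and V: "V \<in> borel_measurable P"
    and f: "f \<in> borel_measurable borel" and B: "B \<in> sets N"
  shows "(\<integral>\<^sup>+\<omega>. indicator B (W \<omega>) * f (V \<omega>) \<partial>P)
       = (\<integral>\<^sup>+\<omega>. indicator B (W \<omega>) * (\<integral>\<^sup>+y. f y \<partial>Q (W \<omega>)) \<partial>P)"
proof (cases "space P = {}")
  case True
  then show ?thesis by (simp add: nn_integral_empty)
next
  case False
  define PB where "PB = density P (\<lambda>\<omega>. indicator B (W \<omega>))"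
  have Q: "Q \<in> measurable N (subprob_algebra borel)" using cd by (simp add: is_cond_distr_def)
  have QW: "(\<lambda>\<omega>. Q (W \<omega>)) \<in> measurable PB (subprob_algebra borel)"
    unfolding PB_def using measurable_compose[OF W Q] by simp
  have IB: "(\<lambda>\<omega>. indicator B (W \<omega>)) \<in> borel_measurable P" using W B by measurable
  have fV: "(\<lambda>\<omega>. f (V \<omega>)) \<in> borel_measurable P" using f V by measurable
  have "(\<integral>\<^sup>+\<omega>. indicator B (W \<omega>) * f (V \<omega>) \<partial>P) = (\<integral>\<^sup>+y. f y \<partial>distr PB borel V)"
    using f V by (simp add: PB_def nn_integral_density[OF IB fV] nn_integral_distr)
  also have "\<dots> = (\<integral>\<^sup>+\<omega>. (\<integral>\<^sup>+y. f y \<partial>Q (W \<omega>)) \<partial>PB)"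
    using is_cond_distr_distr_density_eq_bind[OF cd W V B False, folded PB_def]
    by (simp add: nn_integral_bind[OF f QW])
  also have "\<dots> = (\<integral>\<^sup>+\<omega>. indicator B (W \<omega>) * (\<integral>\<^sup>+y. f y \<partial>Q (W \<omega>)) \<partial>P)"
    unfolding PB_def using measurable_compose[OF W measurable_compose[OF Q nn_integral_measurable_subprob_algebra[OF f]]]
    by (intro nn_integral_density[OF IB]) simp
  finally show ?thesis .
qed

text \<open>Where a half of the mean of Q b is infinite, enn2real makes kernel_mean return junk;
for a kernel of an integrable variable this happens only on a null set.\<close>
definition kernel_mean :: "('b \<Rightarrow> real measure) \<Rightarrow> 'b \<Rightarrow> real" where
  "kernel_mean Q b = enn2real (\<integral>\<^sup>+y. ennreal y \<partial>Q b) - enn2real (\<integral>\<^sup>+y. ennreal (- y) \<partial>Q b)"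

lemma borel_measurable_kernel_mean:
  assumes "Q \<in> measurable N (subprob_algebra borel)"
  shows "kernel_mean Q \<in> borel_measurable N"
  unfolding kernel_mean_def using assms by measurable

lemma integrable_indicator_vimage_mult:
  fixes f :: "'a \<Rightarrow> real"
  assumes "W \<in> measurable P N" and "B \<in> sets N" and "integrable P f"
  shows "integrable P (\<lambda>\<omega>. indicator B (W \<omega>) * f \<omega>)"
  using assms by (intro Bochner_Integration.integrable_bound[OF \<open>integrable P f\<close>])
    (auto split: split_indicator)

lemma set_integral_vimage:
  fixes f :: "'a \<Rightarrow> real"
  shows "set_lebesgue_integral P (W -` B \<inter> space P) f = (\<integral>\<omega>. indicator B (W \<omega>) * f \<omega> \<partial>P)"
  unfolding set_lebesgue_integral_def
  by (rule Bochner_Integration.integral_cong[OF refl]) (auto split: split_indicator)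

lemma is_cond_distr_integral_positive_part:
  assumes cd: "is_cond_distr P N W V Q"
    and W: "W \<in> measurable P N" and V: "V \<in> borel_measurable P"
    and s: "s \<in> borel_measurable borel" and int: "integrable P (\<lambda>\<omega>. s (V \<omega>))"
  defines "F \<equiv> \<lambda>b. \<integral>\<^sup>+y. ennreal (s y) \<partial>Q b"
  shows "integrable P (\<lambda>\<omega>. enn2real (F (W \<omega>)))"
    and "B \<in> sets N \<Longrightarrow> (\<integral>\<omega>. indicator B (W \<omega>) * max (s (V \<omega>)) 0 \<partial>P)
                       = (\<integral>\<omega>. indicator B (W \<omega>) * enn2real (F (W \<omega>)) \<partial>P)"
proof -
  have Q: "Q \<in> measurable N (subprob_algebra borel)" using cd by (simp add: is_cond_distr_def)
  have FW: "(\<lambda>\<omega>. F (W \<omega>)) \<in> borel_measurable P" unfolding F_def using W Q s by measurable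
  have sV: "(\<lambda>\<omega>. s (V \<omega>)) \<in> borel_measurable P" using V s by measurable
  have key: "(\<integral>\<^sup>+\<omega>. indicator B (W \<omega>) * ennreal (s (V \<omega>)) \<partial>P)
           = (\<integral>\<^sup>+\<omega>. indicator B (W \<omega>) * F (W \<omega>) \<partial>P)" if B: "B \<in> sets N" for B
    unfolding F_def using s by (intro is_cond_distr_nn_integral[OF cd W V _ B]) simp
  have "(\<integral>\<^sup>+\<omega>. F (W \<omega>) \<partial>P) = (\<integral>\<^sup>+\<omega>. indicator (space N) (W \<omega>) * ennreal (s (V \<omega>)) \<partial>P)"
    using key[OF sets.top] measurable_space[OF W] by (simp cong: nn_integral_cong)
  also have "\<dots> \<le> (\<integral>\<^sup>+\<omega>. ennreal (norm (s (V \<omega>))) \<partial>P)"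
    by (intro nn_integral_mono) (auto split: split_indicator intro: ennreal_leI)
  also have "\<dots> < \<infinity>" using int by (simp add: integrable_iff_bounded)
  finally have finite_F: "(\<integral>\<^sup>+\<omega>. F (W \<omega>) \<partial>P) < \<infinity>" .
  then have AE_finite: "AE \<omega> in P. F (W \<omega>) \<noteq> \<infinity>"
    by (intro nn_integral_PInf_AE[OF FW]) simp
  show "integrable P (\<lambda>\<omega>. enn2real (F (W \<omega>)))"
    unfolding integrable_iff_bounded
  proof
    have "(\<integral>\<^sup>+\<omega>. ennreal (norm (enn2real (F (W \<omega>)))) \<partial>P) \<le> (\<integral>\<^sup>+\<omega>. F (W \<omega>) \<partial>P)"
      by (intro nn_integral_mono) (simp add: ennreal_enn2real_if)
    then show "(\<integral>\<^sup>+\<omega>. ennreal (norm (enn2real (F (W \<omega>)))) \<partial>P) < \<infinity>"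
      using finite_F by (rule le_less_trans)
  qed (use FW in simp)
  assume B: "B \<in> sets N"
  have IB: "(\<lambda>\<omega>. indicator B (W \<omega>) :: real) \<in> borel_measurable P" using W B by measurable
  have "(\<integral>\<omega>. indicator B (W \<omega>) * max (s (V \<omega>)) 0 \<partial>P)
      = enn2real (\<integral>\<^sup>+\<omega>. ennreal (indicator B (W \<omega>) * max (s (V \<omega>)) 0) \<partial>P)"
    using IB sV by (intro integral_eq_nn_integral) auto
  also have "(\<integral>\<^sup>+\<omega>. ennreal (indicator B (W \<omega>) * max (s (V \<omega>)) 0) \<partial>P)
           = (\<integral>\<^sup>+\<omega>. indicator B (W \<omega>) * ennreal (s (V \<omega>)) \<partial>P)"
    by (intro nn_integral_cong) (auto split: split_indicator simp: max_def ennreal_neg)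
  also have "\<dots> = (\<integral>\<^sup>+\<omega>. indicator B (W \<omega>) * F (W \<omega>) \<partial>P)" by (rule key[OF B])
  also have "enn2real \<dots> = (\<integral>\<omega>. indicator B (W \<omega>) * enn2real (F (W \<omega>)) \<partial>P)"
    using AE_finite IB FW
    by (intro enn2real_nn_integral_eq_integral)
       (auto elim!: eventually_mono split: split_indicator simp: less_top)
  finally show "(\<integral>\<omega>. indicator B (W \<omega>) * max (s (V \<omega>)) 0 \<partial>P)
              = (\<integral>\<omega>. indicator B (W \<omega>) * enn2real (F (W \<omega>)) \<partial>P)" .
qed

lemma is_cexp_kernel_mean:
  assumes cd: "is_cond_distr P N W V Q"
    and W: "W \<in> measurable P N" and V: "V \<in> borel_measurable P" and int: "integrable P V"
  shows "is_cexp P W N V (kernel_mean Q)"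
proof -
  have Q: "Q \<in> measurable N (subprob_algebra borel)" using cd by (simp add: is_cond_distr_def)
  note pos = is_cond_distr_integral_positive_part[OF cd W V, of "\<lambda>y. y"]
  note neg = is_cond_distr_integral_positive_part[OF cd W V, of uminus]
  define F where "F s b = enn2real (\<integral>\<^sup>+y. ennreal (s y) \<partial>Q b)" for s :: "real \<Rightarrow> real" and b
  have int_pos: "integrable P (\<lambda>\<omega>. F (\<lambda>y. y) (W \<omega>))"
    and int_neg: "integrable P (\<lambda>\<omega>. F uminus (W \<omega>))"
    using pos(1) neg(1) int by (simp_all add: F_def)
  have mean: "kernel_mean Q b = F (\<lambda>y. y) b - F uminus b" for b
    by (simp add: kernel_mean_def F_def)
  have "(\<integral>\<omega>. indicator B (W \<omega>) * V \<omega> \<partial>P) = (\<integral>\<omega>. indicator B (W \<omega>) * kernel_mean Q (W \<omega>) \<partial>P)"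
    if B: "B \<in> sets N" for B
  proof -
    note int_ind = integrable_indicator_vimage_mult[OF W B]
    have "(\<integral>\<omega>. indicator B (W \<omega>) * V \<omega> \<partial>P)
        = (\<integral>\<omega>. indicator B (W \<omega>) * max (V \<omega>) 0 - indicator B (W \<omega>) * max (- V \<omega>) 0 \<partial>P)"
      by (intro Bochner_Integration.integral_cong) (auto simp: max_def)
    also have "\<dots> = (\<integral>\<omega>. indicator B (W \<omega>) * max (V \<omega>) 0 \<partial>P) - (\<integral>\<omega>. indicator B (W \<omega>) * max (- V \<omega>) 0 \<partial>P)"
      using int by (intro Bochner_Integration.integral_diff int_ind) auto
    also have "\<dots> = (\<integral>\<omega>. indicator B (W \<omega>) * F (\<lambda>y. y) (W \<omega>) \<partial>P) - (\<integral>\<omega>. indicator B (W \<omega>) * F uminus (W \<omega>) \<partial>P)"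
      using pos(2)[OF _ _ B] neg(2)[OF _ _ B] int by (simp add: F_def)
    also have "\<dots> = (\<integral>\<omega>. indicator B (W \<omega>) * kernel_mean Q (W \<omega>) \<partial>P)"
      unfolding mean right_diff_distrib
      by (intro Bochner_Integration.integral_diff[symmetric] int_ind int_pos int_neg)
    finally show ?thesis .
  qed
  then show ?thesis
    using W V int int_pos int_neg borel_measurable_kernel_mean[OF Q]
    by (auto simp: is_cexp_def set_integral_vimage mean)
qed

lemma set_integral_cexp:
  assumes "is_cexp P W N V h" and A: "A \<in> sets N"
  shows "set_lebesgue_integral P (W -` A \<inter> space P) V = set_lebesgue_integral (distr P N W) A h"
proof -
  have W: "W \<in> measurable P N" and h: "h \<in> borel_measurable N"
    using assms by (auto simp: is_cexp_def)
  have "set_lebesgue_integral P (W -` A \<inter> space P) V = (\<integral>\<omega>. indicator A (W \<omega>) * h (W \<omega>) \<partial>P)"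
    using assms by (simp add: is_cexp_def set_integral_vimage)
  also have "\<dots> = set_lebesgue_integral (distr P N W) A h"
    unfolding set_lebesgue_integral_def using W h A by (subst integral_distr) auto
  finally show ?thesis .
qed

lemma is_cexp_AE_eq:
  assumes h1: "is_cexp P1 W1 N V1 h1" and h2: "is_cexp P2 W2 N V2 h2"
    and law: "distr P1 N W1 = distr P2 N W2"
    and eq: "\<And>A. A \<in> sets N \<Longrightarrow> set_lebesgue_integral P1 (W1 -` A \<inter> space P1) V1
                                = set_lebesgue_integral P2 (W2 -` A \<inter> space P2) V2"
  shows "AE x in distr P1 N W1. h1 x = h2 x"
proof (rule density_unique_real)
  have "W1 \<in> measurable P1 N" "W2 \<in> measurable P2 N" "h1 \<in> borel_measurable N" "h2 \<in> borel_measurable N"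
    "integrable P1 (\<lambda>\<omega>. h1 (W1 \<omega>))" "integrable P2 (\<lambda>\<omega>. h2 (W2 \<omega>))"
    using h1 h2 by (auto simp: is_cexp_def)
  then show "integrable (distr P1 N W1) h1" "integrable (distr P1 N W1) h2"
    by (simp add: integrable_distr_eq, simp add: law integrable_distr_eq)
  fix A assume "A \<in> sets (distr P1 N W1)"
  then show "set_lebesgue_integral (distr P1 N W1) A h1 = set_lebesgue_integral (distr P1 N W1) A h2"
    using eq[of A] set_integral_cexp[OF h1, of A] set_integral_cexp[OF h2, of A] law by simp
qed

lemma is_cexp_unique:
  assumes "is_cexp P W N V h1" and "is_cexp P W N V h2"
  shows "AE x in distr P N W. h1 x = h2 x"
  using assms by (rule is_cexp_AE_eq) simp_all

lemma is_cexp_set_integral_eq: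
  assumes k1: "is_cexp P1 W1 N V1 k1" and k2: "is_cexp P2 W2 N V2 k2"
    and law: "distr P1 N W1 = distr P2 N W2"
    and AE: "AE x in distr P1 N W1. k1 x = k2 x" and B: "B \<in> sets N"
  shows "set_lebesgue_integral P1 (W1 -` B \<inter> space P1) V1
       = set_lebesgue_integral P2 (W2 -` B \<inter> space P2) V2"
proof -
  have "k1 \<in> borel_measurable N" "k2 \<in> borel_measurable N"
    using k1 k2 by (simp_all add: is_cexp_def)
  then have "set_lebesgue_integral (distr P1 N W1) B k1 = set_lebesgue_integral (distr P1 N W1) B k2"
    using AE B by (intro set_lebesgue_integral_cong_AE) (auto elim!: eventually_mono)
  then show ?thesis
    by (simp add: set_integral_cexp[OF k1 B] set_integral_cexp[OF k2 B] law)
qed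

lemma is_cexp_cong_AE:
  assumes h: "is_cexp P W N V h" and V': "V' \<in> borel_measurable P"
    and AE: "AE \<omega> in P. V \<omega> = V' \<omega>"
  shows "is_cexp P W N V' h"
proof -
  have V: "V \<in> borel_measurable P" and W: "W \<in> measurable P N"
    using h by (auto simp: is_cexp_def)
  have "(\<integral>\<omega>. indicator A (W \<omega>) * V \<omega> \<partial>P) = (\<integral>\<omega>. indicator A (W \<omega>) * V' \<omega> \<partial>P)"
    if "A \<in> sets N" for A
    using AE V V' W that by (intro integral_cong_AE) auto
  moreover have "integrable P V'"
    using h AE V' by (auto simp: is_cexp_def intro: integrable_cong_AE_imp)
  ultimately show ?thesis
    using h by (simp add: is_cexp_def set_integral_vimage)
qed

lemma is_cexp_coarsen:
  assumes k: "is_cexp P W N V k" and f: "f \<in> measurable N N'"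
    and W': "\<And>\<omega>. \<omega> \<in> space P \<Longrightarrow> W' \<omega> = f (W \<omega>)"
    and h: "is_cexp P W' N' (\<lambda>\<omega>. k (W \<omega>)) h"
  shows "is_cexp P W' N' V h"
  unfolding is_cexp_def
proof (intro conjI ballI)
  fix A assume A: "A \<in> sets N'"
  have W: "W \<in> measurable P N" using k by (simp add: is_cexp_def)
  have "W' -` A \<inter> space P = W -` (f -` A \<inter> space N) \<inter> space P"
    using W' measurable_space[OF W] by auto
  moreover have "set_lebesgue_integral P (W -` (f -` A \<inter> space N) \<inter> space P) V
           = set_lebesgue_integral P (W -` (f -` A \<inter> space N) \<inter> space P) (\<lambda>\<omega>. k (W \<omega>))"
    using k measurable_sets[OF f A] unfolding is_cexp_def by blast
  ultimately have "set_lebesgue_integral P (W' -` A \<inter> space P) V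
           = set_lebesgue_integral P (W' -` A \<inter> space P) (\<lambda>\<omega>. k (W \<omega>))"
    by simp
  also have "\<dots> = set_lebesgue_integral P (W' -` A \<inter> space P) (\<lambda>\<omega>. h (W' \<omega>))"
    using h A by (simp add: is_cexp_def)
  finally show "set_lebesgue_integral P (W' -` A \<inter> space P) V
              = set_lebesgue_integral P (W' -` A \<inter> space P) (\<lambda>\<omega>. h (W' \<omega>))" .
qed (use k h in \<open>auto simp: is_cexp_def\<close>)

lemma is_cond_distr_nn_integral_joint:
  assumes cd: "is_cond_distr P N W V Q"
    and W: "W \<in> measurable P N" and V: "V \<in> borel_measurable P"
    and f: "f \<in> borel_measurable borel" and B: "B \<in> sets N"
  shows "(\<integral>\<^sup>+x. indicator B x * (\<integral>\<^sup>+y. f y \<partial>Q x) \<partial>distr P N W)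
       = (\<integral>\<^sup>+t. indicator B (fst t) * f (snd t) \<partial>distr P (N \<Otimes>\<^sub>M borel) (\<lambda>\<omega>. (W \<omega>, V \<omega>)))"
proof -
  have Q: "Q \<in> measurable N (subprob_algebra borel)" using cd by (simp add: is_cond_distr_def)
  have "(\<integral>\<^sup>+x. indicator B x * (\<integral>\<^sup>+y. f y \<partial>Q x) \<partial>distr P N W)
      = (\<integral>\<^sup>+\<omega>. indicator B (W \<omega>) * (\<integral>\<^sup>+y. f y \<partial>Q (W \<omega>)) \<partial>P)"
    using measurable_compose[OF Q nn_integral_measurable_subprob_algebra[OF f]] B
    by (simp add: nn_integral_distr[OF W])
  also have "\<dots> = (\<integral>\<^sup>+\<omega>. indicator B (W \<omega>) * f (V \<omega>) \<partial>P)"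
    by (rule is_cond_distr_nn_integral[OF cd W V f B, symmetric])
  also have "\<dots> = (\<integral>\<^sup>+t. indicator B (fst t) * f (snd t) \<partial>distr P (N \<Otimes>\<^sub>M borel) (\<lambda>\<omega>. (W \<omega>, V \<omega>)))"
  proof -
    have "(\<lambda>t. indicator B (fst t) * f (snd t)) \<in> borel_measurable (N \<Otimes>\<^sub>M borel)"
      using B f by measurable
    then show ?thesis using W V by (subst nn_integral_distr) auto
  qed
  finally show ?thesis .
qed

lemma distr_fst_distr_Pair:
  assumes "W \<in> measurable P N" and "V \<in> measurable P N'"
  shows "distr (distr P (N \<Otimes>\<^sub>M N') (\<lambda>\<omega>. (W \<omega>, V \<omega>))) N fst = distr P N W"
  using assms by (subst distr_distr) (auto simp: comp_def)

lemma kernel_mean_AE_eq: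
  assumes cd1: "is_cond_distr P1 N W1 V1 Q1" and W1: "W1 \<in> measurable P1 N" and V1: "V1 \<in> borel_measurable P1"
    and cd2: "is_cond_distr P2 N W2 V2 Q2" and W2: "W2 \<in> measurable P2 N" and V2: "V2 \<in> borel_measurable P2"
    and fin: "finite_measure P1"
    and law: "distr P1 (N \<Otimes>\<^sub>M borel) (\<lambda>\<omega>. (W1 \<omega>, V1 \<omega>)) = distr P2 (N \<Otimes>\<^sub>M borel) (\<lambda>\<omega>. (W2 \<omega>, V2 \<omega>))"
  shows "AE x in distr P1 N W1. kernel_mean Q1 x = kernel_mean Q2 x"
proof -
  have Q1: "Q1 \<in> measurable N (subprob_algebra borel)" and Q2: "Q2 \<in> measurable N (subprob_algebra borel)"
    using cd1 cd2 by (simp_all add: is_cond_distr_def)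
  interpret finite_measure "distr P1 N W1" using fin W1 by (rule finite_measure.finite_measure_distr)
  have AE_nn: "AE x in distr P1 N W1. (\<integral>\<^sup>+y. ennreal (s y) \<partial>Q1 x) = (\<integral>\<^sup>+y. ennreal (s y) \<partial>Q2 x)"
    if s: "s \<in> borel_measurable borel" for s :: "real \<Rightarrow> real"
  proof (rule density_unique_finite_measure)
    show "(\<lambda>x. \<integral>\<^sup>+y. ennreal (s y) \<partial>Q1 x) \<in> borel_measurable (distr P1 N W1)"
      "(\<lambda>x. \<integral>\<^sup>+y. ennreal (s y) \<partial>Q2 x) \<in> borel_measurable (distr P1 N W1)"
      using Q1 Q2 s by measurable
    fix B assume "B \<in> sets (distr P1 N W1)"
    then have B: "B \<in> sets N" by simp
    have es: "(\<lambda>y. ennreal (s y)) \<in> borel_measurable borel" using s by measurable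
    show "(\<integral>\<^sup>+x. (\<integral>\<^sup>+y. ennreal (s y) \<partial>Q1 x) * indicator B x \<partial>distr P1 N W1)
        = (\<integral>\<^sup>+x. (\<integral>\<^sup>+y. ennreal (s y) \<partial>Q2 x) * indicator B x \<partial>distr P1 N W1)"
      using is_cond_distr_nn_integral_joint[OF cd1 W1 V1 es B]
        is_cond_distr_nn_integral_joint[OF cd2 W2 V2 es B]
      unfolding distr_fst_distr_Pair[OF W1 V1, symmetric] distr_fst_distr_Pair[OF W2 V2, symmetric] law
      by (simp add: mult.commute)
  qed auto
  have "(\<lambda>y::real. y) \<in> borel_measurable borel" "(uminus :: real \<Rightarrow> real) \<in> borel_measurable borel"
    by simp_all
  from this[THEN AE_nn] show ?thesis
    by eventually_elim (simp add: kernel_mean_def)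
qed

lemma is_cond_distr_factor:
  assumes U: "U \<in> measurable P K" and V: "V \<in> borel_measurable P" and f: "f \<in> measurable K N"
    and W: "\<And>\<omega>. \<omega> \<in> space P \<Longrightarrow> W \<omega> = f (U \<omega>)"
    and Q: "Q \<in> measurable N (subprob_algebra borel)"
    and eq: "\<And>A B. A \<in> sets borel \<Longrightarrow> B \<in> sets K \<Longrightarrow>
               emeasure P {\<omega>\<in>space P. V \<omega> \<in> A \<and> U \<omega> \<in> B}
               = (\<integral>\<^sup>+\<omega>. indicator B (U \<omega>) * emeasure (Q (W \<omega>)) A \<partial>P)"
  shows "is_cond_distr P N W V Q"
  unfolding is_cond_distr_def
proof (intro conjI Q ballI)
  fix A :: "real set" and B assume A: "A \<in> sets borel" and B: "B \<in> sets N"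
  have "emeasure P {\<omega>\<in>space P. V \<omega> \<in> A \<and> W \<omega> \<in> B}
      = emeasure P {\<omega>\<in>space P. V \<omega> \<in> A \<and> U \<omega> \<in> f -` B \<inter> space K}"
    using W measurable_space[OF U] by (intro arg_cong[where f="emeasure P"]) auto
  also have "\<dots> = (\<integral>\<^sup>+\<omega>. indicator B (W \<omega>) * emeasure (Q (W \<omega>)) A \<partial>P)"
    unfolding eq[OF A measurable_sets[OF f B]] using W measurable_space[OF U]
    by (intro nn_integral_cong) (auto split: split_indicator)
  finally show "emeasure P {\<omega>\<in>space P. V \<omega> \<in> A \<and> W \<omega> \<in> B}
      = (\<integral>\<^sup>+\<omega>. indicator B (W \<omega>) * emeasure (Q (W \<omega>)) A \<partial>P)" .
qed

text \<open>Selection on S = 1 conditions on an event determined by U = (X, Z, S). A kernel of V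
given U that depends on U only through W survives such conditioning.\<close>
lemma is_cond_distr_uniform_measure:
  assumes U: "U \<in> measurable P K" and V: "V \<in> borel_measurable P" and f: "f \<in> measurable K N"
    and W: "\<And>\<omega>. \<omega> \<in> space P \<Longrightarrow> W \<omega> = f (U \<omega>)"
    and Q: "Q \<in> measurable N (subprob_algebra borel)"
    and eq: "\<And>A B. A \<in> sets borel \<Longrightarrow> B \<in> sets K \<Longrightarrow>
               emeasure P {\<omega>\<in>space P. V \<omega> \<in> A \<and> U \<omega> \<in> B}
               = (\<integral>\<^sup>+\<omega>. indicator B (U \<omega>) * emeasure (Q (W \<omega>)) A \<partial>P)"
    and C: "C \<in> sets K"
  shows "is_cond_distr (uniform_measure P (U -` C \<inter> space P)) N W V Q"
  unfolding is_cond_distr_def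
proof (intro conjI Q ballI)
  fix A :: "real set" and B assume A: "A \<in> sets borel" and B: "B \<in> sets N"
  let ?E = "U -` C \<inter> space P"
  have E: "?E \<in> sets P" using measurable_sets[OF U C] .
  have W': "W \<in> measurable P N"
    using measurable_compose[OF U f] by (subst measurable_cong[where g="\<lambda>\<omega>. f (U \<omega>)"]) (simp_all add: W)
  have QA: "(\<lambda>\<omega>. indicator B (W \<omega>) * emeasure (Q (W \<omega>)) A) \<in> borel_measurable P"
    using W' Q A B by measurable
  have fBC: "f -` B \<inter> space K \<inter> C \<in> sets K" using measurable_sets[OF f B] C by (rule sets.Int)
  have "{\<omega>\<in>space P. V \<omega> \<in> A \<and> W \<omega> \<in> B} \<inter> ?E = {\<omega>\<in>space P. V \<omega> \<in> A \<and> U \<omega> \<in> f -` B \<inter> space K \<inter> C}"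
    using W measurable_space[OF U] by auto
  moreover have "{\<omega>\<in>space P. V \<omega> \<in> A \<and> W \<omega> \<in> B} \<in> sets P" using A B V W' by measurable
  ultimately have "emeasure (uniform_measure P ?E) {\<omega>\<in>space P. V \<omega> \<in> A \<and> W \<omega> \<in> B}
      = emeasure P {\<omega>\<in>space P. V \<omega> \<in> A \<and> U \<omega> \<in> f -` B \<inter> space K \<inter> C} / emeasure P ?E"
    using E by (simp add: Int_commute)
  also have "\<dots> = (\<integral>\<^sup>+\<omega>. indicator B (W \<omega>) * emeasure (Q (W \<omega>)) A * indicator ?E \<omega> \<partial>P) / emeasure P ?E"
    unfolding eq[OF A fBC] using W measurable_space[OF U]
    by (intro arg_cong2[where f="(/)"] nn_integral_cong refl) (auto split: split_indicator)
  also have "\<dots> = (\<integral>\<^sup>+\<omega>. indicator B (W \<omega>) * emeasure (Q (W \<omega>)) A \<partial>uniform_measure P ?E)"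
    by (rule nn_integral_uniform_measure[OF QA E, symmetric])
  finally show "emeasure (uniform_measure P ?E) {\<omega>\<in>space (uniform_measure P ?E). V \<omega> \<in> A \<and> W \<omega> \<in> B}
      = (\<integral>\<^sup>+\<omega>. indicator B (W \<omega>) * emeasure (Q (W \<omega>)) A \<partial>uniform_measure P ?E)"
    by simp
qed

lemma vspace_singleton_sets: "{v \<in> space vspace. v = c} \<in> sets vspace"
proof -
  have "{v \<in> space vspace. v = c} = {v \<in> space vspace. \<forall>i. v i = c i}" by auto
  also have "\<dots> \<in> sets vspace" unfolding vspace_def by measurable
  finally show ?thesis .
qed

lemma sets_Pdo: "sets (Pdo M d th) = sets (PiM (endo M) (\<lambda>_. vspace))"
  by (simp add: Pdo_def)

lemma sets_Psel: "sets (Psel M S d th) = sets (PiM (endo M) (\<lambda>_. vspace))"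
  by (simp add: Psel_def Pdo_def)

lemma measurable_variables:
  assumes sets: "sets P = sets (PiM E (\<lambda>_. vspace))"
    and "X \<in> E" "Y \<in> E" "S \<in> E" "Z \<subseteq> E"
  shows "(\<lambda>\<omega>. \<omega> X) \<in> measurable P vspace"
    and "(\<lambda>\<omega>. \<omega> Y 0) \<in> borel_measurable P"
    and "(\<lambda>\<omega>. (\<omega> X, restrict \<omega> Z)) \<in> measurable P (XZspace Z)"
    and "(\<lambda>\<omega>. (\<omega> X, restrict \<omega> Z, \<omega> S)) \<in> measurable P (XZSspace Z)"
    and "(\<lambda>\<omega>. (\<omega> X, \<omega> Y 0, restrict \<omega> Z)) \<in> measurable P (XYZspace Z)"
proof -
  have component: "(\<lambda>\<omega>. \<omega> v) \<in> measurable P vspace" if "v \<in> E" for v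
    unfolding measurable_cong_sets[OF sets refl] using that by measurable
  have Z: "(\<lambda>\<omega>. restrict \<omega> Z) \<in> measurable P (PiM Z (\<lambda>_. vspace))"
    unfolding measurable_cong_sets[OF sets refl] by (rule measurable_restrict_subset) fact
  have "(\<lambda>v::vec. v 0) \<in> borel_measurable vspace" unfolding vspace_def by measurable
  then have Y: "(\<lambda>\<omega>. \<omega> Y 0) \<in> borel_measurable P"
    using component[OF \<open>Y \<in> E\<close>] by measurable
  show "(\<lambda>\<omega>. \<omega> X) \<in> measurable P vspace" "(\<lambda>\<omega>. \<omega> Y 0) \<in> borel_measurable P"
    using component[OF \<open>X \<in> E\<close>] Y .
  show "(\<lambda>\<omega>. (\<omega> X, restrict \<omega> Z)) \<in> measurable P (XZspace Z)"
    "(\<lambda>\<omega>. (\<omega> X, restrict \<omega> Z, \<omega> S)) \<in> measurable P (XZSspace Z)"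
    "(\<lambda>\<omega>. (\<omega> X, \<omega> Y 0, restrict \<omega> Z)) \<in> measurable P (XYZspace Z)"
    unfolding XZspace_def XZSspace_def XYZspace_def
    using component[OF \<open>X \<in> E\<close>] component[OF \<open>S \<in> E\<close>] Y Z by measurable
qed

lemma finite_measure_Pdo:
  assumes "wf_scm M"
  shows "finite_measure (Pdo M d th)"
proof (rule finite_measureI)
  interpret prob_space "PiM (exo M) (pexo M)"
    using assms unfolding wf_scm_def by (intro prob_space_PiM) auto
  have "emeasure (Pdo M d th) (space (Pdo M d th)) \<le> emeasure (PiM (exo M) (pexo M)) (space (PiM (exo M) (pexo M)))"
    unfolding Pdo_def distr_def by (simp add: emeasure_measure_of_conv emeasure_mono)
  then show "emeasure (Pdo M d th) (space (Pdo M d th)) \<noteq> \<infinity>"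
    by (auto simp: emeasure_space_1 top_unique)
qed

lemma finite_measure_Psel:
  assumes "wf_scm M" and "S \<in> endo M"
  shows "finite_measure (Psel M S d th)"
proof -
  interpret Pdo: finite_measure "Pdo M d th" using assms(1) by (rule finite_measure_Pdo)
  define C where "C = {\<omega> \<in> space (Pdo M d th). \<omega> S = enc 1}"
  have S: "(\<lambda>\<omega>. \<omega> S) \<in> measurable (Pdo M d th) vspace"
    unfolding measurable_cong_sets[OF sets_Pdo refl] using assms(2) by measurable
  have "C = (\<lambda>\<omega>. \<omega> S) -` {v \<in> space vspace. v = enc 1} \<inter> space (Pdo M d th)"
    using measurable_space[OF S] by (auto simp: C_def)
  then have C: "C \<in> sets (Pdo M d th)"
    using measurable_sets[OF S vspace_singleton_sets] by simp
  have "emeasure (Psel M S d th) (space (Psel M S d th)) = emeasure (Pdo M d th) C / emeasure (Pdo M d th) C"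
    using sets.sets_into_space[OF C] by (simp add: Psel_def C_def[symmetric] C Int_absorb2)
  also have "\<dots> \<noteq> \<infinity>"
  proof (cases "emeasure (Pdo M d th) C = 0")
    case False
    have "emeasure (Pdo M d th) C < \<top>" by (meson Pdo.emeasure_finite top.not_eq_extremum)
    then show ?thesis using ennreal_divide_self[OF False] by simp
  qed simp
  finally show ?thesis by (rule finite_measureI)
qed

lemma trans_ci_is_cond_distr:
  fixes M :: "'v scm"
  assumes ci: "trans_ci M Th X Y S Z"
    and vars: "X \<in> endo M" "Y \<in> endo M" "S \<in> endo M" "Z \<subseteq> endo M"
  shows "\<exists>Q. \<forall>d\<in>{0, 1}. \<forall>th\<in>Th.
    is_cond_distr (Pdo M d th) (XZspace Z) (\<lambda>\<omega>. (\<omega> X, restrict \<omega> Z)) (\<lambda>\<omega>. \<omega> Y 0) Q \<and>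
    is_cond_distr (Psel M S d th) (XZspace Z) (\<lambda>\<omega>. (\<omega> X, restrict \<omega> Z)) (\<lambda>\<omega>. \<omega> Y 0) Q"
proof -
  obtain Q where Q: "Q \<in> measurable (XZspace Z) (prob_algebra borel)"
    and eq: "\<forall>d\<in>{0, 1}. \<forall>th\<in>Th. \<forall>A\<in>sets borel. \<forall>B\<in>sets (XZSspace Z).
          emeasure (Pdo M d th)
            {\<omega> \<in> space (Pdo M d th). \<omega> Y 0 \<in> A \<and> (\<omega> X, restrict \<omega> Z, \<omega> S) \<in> B}
          = (\<integral>\<^sup>+ \<omega>. indicator B (\<omega> X, restrict \<omega> Z, \<omega> S) *
                     emeasure (Q (\<omega> X, restrict \<omega> Z)) A \<partial>Pdo M d th)"
    using ci unfolding trans_ci_def by blast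
  let ?U = "\<lambda>\<omega>. (\<omega> X, restrict \<omega> Z, \<omega> S)"
  define f where "f t = (fst t, fst (snd t))" for t :: "vec \<times> ('v \<Rightarrow> vec) \<times> vec"
  define C where "C = (\<lambda>t. snd (snd t)) -` {v \<in> space vspace. v = enc 1} \<inter> space (XZSspace Z)"
  have f: "f \<in> measurable (XZSspace Z) (XZspace Z)"
    unfolding f_def XZSspace_def XZspace_def by measurable
  have C: "C \<in> sets (XZSspace Z)"
    unfolding C_def XZSspace_def by (intro measurable_sets[OF _ vspace_singleton_sets]) measurable
  note Q' = measurable_prob_algebraD[OF Q]
  have Pdo: "is_cond_distr (Pdo M d th) (XZspace Z) (\<lambda>\<omega>. (\<omega> X, restrict \<omega> Z)) (\<lambda>\<omega>. \<omega> Y 0) Q"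
    and Psel: "is_cond_distr (Psel M S d th) (XZspace Z) (\<lambda>\<omega>. (\<omega> X, restrict \<omega> Z)) (\<lambda>\<omega>. \<omega> Y 0) Q"
    if d: "d \<in> {0, 1}" and th: "th \<in> Th" for d th
  proof -
    note vars_Pdo = measurable_variables[OF sets_Pdo vars, of d th]
    have Psel_eq: "Psel M S d th = uniform_measure (Pdo M d th) (?U -` C \<inter> space (Pdo M d th))"
      unfolding Psel_def C_def using measurable_space[OF vars_Pdo(4)]
      by (intro arg_cong[where f="uniform_measure _"]) (auto simp: XZSspace_def space_pair_measure)
    show "is_cond_distr (Psel M S d th) (XZspace Z) (\<lambda>\<omega>. (\<omega> X, restrict \<omega> Z)) (\<lambda>\<omega>. \<omega> Y 0) Q"
      unfolding Psel_eq using eq d th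
      by (intro is_cond_distr_uniform_measure[OF vars_Pdo(4,2) f _ Q' _ C]) (auto simp: f_def)
    show "is_cond_distr (Pdo M d th) (XZspace Z) (\<lambda>\<omega>. (\<omega> X, restrict \<omega> Z)) (\<lambda>\<omega>. \<omega> Y 0) Q"
      using eq d th by (intro is_cond_distr_factor[OF vars_Pdo(4,2) f _ Q']) (auto simp: f_def)
  qed
  then show ?thesis by blast
qed

lemma hypsD:
  fixes M :: "'v scm"
  assumes "hyps Th X Yh Y S Z d th d' th' M"
  shows "wf_scm M" "X \<in> endo M" "Y \<in> endo M" "S \<in> endo M" "Z \<subseteq> endo M"
    and "trans_ci M Th X Y S Z"
    and "absolutely_continuous
           (distr (Psel M S d' th') (XZspace Z) (\<lambda>\<omega>. (\<omega> X, restrict \<omega> Z)))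
           (distr (Pdo M d th) (XZspace Z) (\<lambda>\<omega>. (\<omega> X, restrict \<omega> Z)))"
  using assms unfolding hyps_def in_class_def sel_setup_def by auto

lemma measurable_fst_XZspace: "fst \<in> measurable (XZspace Z) vspace"
  unfolding XZspace_def by (rule measurable_fst)

lemma hyps_cond_distr:
  fixes M :: "'v scm"
  assumes H: "hyps Th X Yh Y S Z d th d' th' M"
    and inputs: "d \<in> {0, 1}" "d' \<in> {0, 1}" "th \<in> Th" "th' \<in> Th"
  obtains Q where
    "is_cond_distr (Pdo M d th) (XZspace Z) (\<lambda>\<omega>. (\<omega> X, restrict \<omega> Z)) (\<lambda>\<omega>. \<omega> Y 0) Q"
    "is_cond_distr (Psel M S d' th') (XZspace Z) (\<lambda>\<omega>. (\<omega> X, restrict \<omega> Z)) (\<lambda>\<omega>. \<omega> Y 0) Q"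
  using trans_ci_is_cond_distr[OF hypsD(6)[OF H] hypsD(2-5)[OF H]] inputs by blast

lemma obs_eq_imp_joint_Psel_eq:
  fixes M1 M2 :: "'v scm"
  assumes vars1: "X \<in> endo M1" "Y \<in> endo M1" "S \<in> endo M1" "Z \<subseteq> endo M1"
    and vars2: "X \<in> endo M2" "Y \<in> endo M2" "S \<in> endo M2" "Z \<subseteq> endo M2"
    and obs: "obs X Y S Z d th d' th' M1 = obs X Y S Z d th d' th' M2"
  shows "distr (Psel M1 S d' th') (XZspace Z \<Otimes>\<^sub>M borel) (\<lambda>\<omega>. ((\<omega> X, restrict \<omega> Z), \<omega> Y 0))
       = distr (Psel M2 S d' th') (XZspace Z \<Otimes>\<^sub>M borel) (\<lambda>\<omega>. ((\<omega> X, restrict \<omega> Z), \<omega> Y 0))"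
proof -
  define r where "r t = ((fst t, snd (snd t)), fst (snd t))" for t :: "vec \<times> real \<times> ('v \<Rightarrow> vec)"
  have r: "r \<in> measurable (XYZspace Z) (XZspace Z \<Otimes>\<^sub>M borel)"
    unfolding r_def XYZspace_def XZspace_def by measurable
  have joint: "distr P (XZspace Z \<Otimes>\<^sub>M borel) (\<lambda>\<omega>. ((\<omega> X, restrict \<omega> Z), \<omega> Y 0))
      = distr (distr P (XYZspace Z) (\<lambda>\<omega>. (\<omega> X, \<omega> Y 0, restrict \<omega> Z))) (XZspace Z \<Otimes>\<^sub>M borel) r"
    if "(\<lambda>\<omega>. (\<omega> X, \<omega> Y 0, restrict \<omega> Z)) \<in> measurable P (XYZspace Z)" for P
    using that by (subst distr_distr[OF r]) (simp_all add: comp_def r_def)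
  show ?thesis
    using obs
    unfolding joint[OF measurable_variables(5)[OF sets_Psel vars1]]
      joint[OF measurable_variables(5)[OF sets_Psel vars2]]
    by (simp add: obs_def)
qed

lemma hyps_kernel_mean_AE_eq:
  fixes M1 M2 :: "'v scm"
  assumes H1: "hyps Th X Yh Y S Z d th d' th' M1" and H2: "hyps Th X Yh Y S Z d th d' th' M2"
    and obs: "obs X Y S Z d th d' th' M1 = obs X Y S Z d th d' th' M2"
    and Q1: "is_cond_distr (Psel M1 S d' th') (XZspace Z) (\<lambda>\<omega>. (\<omega> X, restrict \<omega> Z)) (\<lambda>\<omega>. \<omega> Y 0) Q1"
    and Q2: "is_cond_distr (Psel M2 S d' th') (XZspace Z) (\<lambda>\<omega>. (\<omega> X, restrict \<omega> Z)) (\<lambda>\<omega>. \<omega> Y 0) Q2"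
  shows "AE x in distr (Pdo M1 d th) (XZspace Z) (\<lambda>\<omega>. (\<omega> X, restrict \<omega> Z)).
           kernel_mean Q1 x = kernel_mean Q2 x"
proof -
  note vars1 = hypsD(2-5)[OF H1] and vars2 = hypsD(2-5)[OF H2]
  note Psel1 = measurable_variables[OF sets_Psel vars1, of S d' th']
    and Psel2 = measurable_variables[OF sets_Psel vars2, of S d' th']
  have "AE x in distr (Psel M1 S d' th') (XZspace Z) (\<lambda>\<omega>. (\<omega> X, restrict \<omega> Z)).
          kernel_mean Q1 x = kernel_mean Q2 x"
    by (rule kernel_mean_AE_eq[OF Q1 Psel1(3,2) Q2 Psel2(3,2)
          finite_measure_Psel[OF hypsD(1)[OF H1] vars1(3)]
          obs_eq_imp_joint_Psel_eq[OF vars1 vars2 obs]])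
  then show ?thesis
    by (rule absolutely_continuous_AE[OF _ hypsD(7)[OF H1], rotated]) simp
qed

lemma is_cexp_adjustment:
  fixes M :: "'v scm"
  assumes H: "hyps Th X Yh Y S Z d th d' th' M"
    and inputs: "d \<in> {0, 1}" "d' \<in> {0, 1}" "th \<in> Th" "th' \<in> Th"
    and g: "is_cexp (Psel M S d' th') (\<lambda>\<omega>. (\<omega> X, restrict \<omega> Z)) (XZspace Z) (\<lambda>\<omega>. \<omega> Y 0) g"
    and h: "is_cexp (Pdo M d th) (\<lambda>\<omega>. \<omega> X) vspace (\<lambda>\<omega>. g (\<omega> X, restrict \<omega> Z)) h"
    and int: "integrable (Pdo M d th) (\<lambda>\<omega>. \<omega> Y 0)"
  shows "is_cexp (Pdo M d th) (\<lambda>\<omega>. \<omega> X) vspace (\<lambda>\<omega>. \<omega> Y 0) h"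
proof -
  obtain Q where
    Pdo: "is_cond_distr (Pdo M d th) (XZspace Z) (\<lambda>\<omega>. (\<omega> X, restrict \<omega> Z)) (\<lambda>\<omega>. \<omega> Y 0) Q" and
    Psel: "is_cond_distr (Psel M S d' th') (XZspace Z) (\<lambda>\<omega>. (\<omega> X, restrict \<omega> Z)) (\<lambda>\<omega>. \<omega> Y 0) Q"
    by (rule hyps_cond_distr[OF H inputs])
  have Q: "Q \<in> measurable (XZspace Z) (subprob_algebra borel)"
    using Psel by (simp add: is_cond_distr_def)
  note vars_Pdo = measurable_variables[OF sets_Pdo hypsD(2-5)[OF H], of d th]
  note vars_Psel = measurable_variables[OF sets_Psel hypsD(2-5)[OF H], of S d' th']
  have "is_cexp (Psel M S d' th') (\<lambda>\<omega>. (\<omega> X, restrict \<omega> Z)) (XZspace Z) (\<lambda>\<omega>. \<omega> Y 0) (kernel_mean Q)"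
    using g by (intro is_cexp_kernel_mean[OF Psel vars_Psel(3,2)]) (simp add: is_cexp_def)
  then have "AE x in distr (Psel M S d' th') (XZspace Z) (\<lambda>\<omega>. (\<omega> X, restrict \<omega> Z)). g x = kernel_mean Q x"
    by (rule is_cexp_unique[OF g])
  then have "AE x in distr (Pdo M d th) (XZspace Z) (\<lambda>\<omega>. (\<omega> X, restrict \<omega> Z)). g x = kernel_mean Q x"
    by (rule absolutely_continuous_AE[OF _ hypsD(7)[OF H], rotated]) simp
  moreover have "{x \<in> space (XZspace Z). g x = kernel_mean Q x} \<in> sets (XZspace Z)"
    using g borel_measurable_kernel_mean[OF Q] unfolding is_cexp_def by (blast intro: borel_measurable_eq)
  ultimately have "AE \<omega> in Pdo M d th. g (\<omega> X, restrict \<omega> Z) = kernel_mean Q (\<omega> X, restrict \<omega> Z)"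
    by (simp add: AE_distr_iff[OF vars_Pdo(3)])
  then have adjusted: "is_cexp (Pdo M d th) (\<lambda>\<omega>. \<omega> X) vspace (\<lambda>\<omega>. kernel_mean Q (\<omega> X, restrict \<omega> Z)) h"
    by (intro is_cexp_cong_AE[OF h] measurable_compose[OF vars_Pdo(3) borel_measurable_kernel_mean[OF Q]])
  have "is_cexp (Pdo M d th) (\<lambda>\<omega>. (\<omega> X, restrict \<omega> Z)) (XZspace Z) (\<lambda>\<omega>. \<omega> Y 0) (kernel_mean Q)"
    by (rule is_cexp_kernel_mean[OF Pdo vars_Pdo(3,2) int])
  from is_cexp_coarsen[OF this measurable_fst_XZspace _ adjusted] show ?thesis by simp
qed

lemma is_cexp_identifiable:
  fixes M1 M2 :: "'v scm"
  assumes H1: "hyps Th X Yh Y S Z d th d' th' M1" and H2: "hyps Th X Yh Y S Z d th d' th' M2"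
    and inputs: "d \<in> {0, 1}" "d' \<in> {0, 1}" "th \<in> Th" "th' \<in> Th"
    and obs: "obs X Y S Z d th d' th' M1 = obs X Y S Z d th d' th' M2"
    and h1: "is_cexp (Pdo M1 d th) (\<lambda>\<omega>. \<omega> X) vspace (\<lambda>\<omega>. \<omega> Y 0) h1"
    and h2: "is_cexp (Pdo M2 d th) (\<lambda>\<omega>. \<omega> X) vspace (\<lambda>\<omega>. \<omega> Y 0) h2"
  shows "AE x in distr (Pdo M1 d th) vspace (\<lambda>\<omega>. \<omega> X). h1 x = h2 x"
proof -
  let ?XZ = "\<lambda>\<omega>. (\<omega> X, restrict \<omega> Z)" and ?Y = "\<lambda>\<omega>. \<omega> Y 0"
  obtain Q1 where Pdo1: "is_cond_distr (Pdo M1 d th) (XZspace Z) ?XZ ?Y Q1"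
    and Psel1: "is_cond_distr (Psel M1 S d' th') (XZspace Z) ?XZ ?Y Q1"
    by (rule hyps_cond_distr[OF H1 inputs])
  obtain Q2 where Pdo2: "is_cond_distr (Pdo M2 d th) (XZspace Z) ?XZ ?Y Q2"
    and Psel2: "is_cond_distr (Psel M2 S d' th') (XZspace Z) ?XZ ?Y Q2"
    by (rule hyps_cond_distr[OF H2 inputs])
  note vars1 = measurable_variables[OF sets_Pdo hypsD(2-5)[OF H1], of d th]
    and vars2 = measurable_variables[OF sets_Pdo hypsD(2-5)[OF H2], of d th]
  have mean1: "is_cexp (Pdo M1 d th) ?XZ (XZspace Z) ?Y (kernel_mean Q1)"
    using h1 by (intro is_cexp_kernel_mean[OF Pdo1 vars1(3,2)]) (simp add: is_cexp_def)
  have mean2: "is_cexp (Pdo M2 d th) ?XZ (XZspace Z) ?Y (kernel_mean Q2)"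
    using h2 by (intro is_cexp_kernel_mean[OF Pdo2 vars2(3,2)]) (simp add: is_cexp_def)
  have law_XZ: "distr (Pdo M1 d th) (XZspace Z) ?XZ = distr (Pdo M2 d th) (XZspace Z) ?XZ"
    using obs by (simp add: obs_def)
  note mean_eq = is_cexp_set_integral_eq[OF mean1 mean2 law_XZ
      hyps_kernel_mean_AE_eq[OF H1 H2 obs Psel1 Psel2]]
  have vimage_X: "(\<lambda>\<omega>. \<omega> X) -` A \<inter> space P = ?XZ -` (fst -` A \<inter> space (XZspace Z)) \<inter> space P"
    for A and P :: "('v \<Rightarrow> vec) measure"
    by (auto simp: XZspace_def space_pair_measure vspace_def space_PiM)
  show ?thesis
  proof (rule is_cexp_AE_eq[OF h1 h2])
    show "distr (Pdo M1 d th) vspace (\<lambda>\<omega>. \<omega> X) = distr (Pdo M2 d th) vspace (\<lambda>\<omega>. \<omega> X)"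
      using distr_distr[OF measurable_fst_XZspace vars1(3)] distr_distr[OF measurable_fst_XZspace vars2(3)]
      by (simp add: law_XZ comp_def)
    fix A assume "A \<in> sets vspace"
    then show "set_lebesgue_integral (Pdo M1 d th) ((\<lambda>\<omega>. \<omega> X) -` A \<inter> space (Pdo M1 d th)) ?Y
        = set_lebesgue_integral (Pdo M2 d th) ((\<lambda>\<omega>. \<omega> X) -` A \<inter> space (Pdo M2 d th)) ?Y"
      unfolding vimage_X by (intro mean_eq measurable_sets[OF measurable_fst_XZspace])
  qed
qed
theorem mainTheorem5:
  fixes X Yh Y S :: 'v and Z :: "'v set" and Th :: "vec set"
    and d d' :: real and th th' :: vec and k :: nat
  assumes "Th \<subseteq> euc k"
    and "d \<in> {0, 1}" and "d' \<in> {0, 1}" and "th \<in> Th" and "th' \<in> Th"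
  shows
    "(\<forall>M1 M2. hyps Th X Yh Y S Z d th d' th' M1 \<longrightarrow> hyps Th X Yh Y S Z d th d' th' M2 \<longrightarrow>
        obs X Y S Z d th d' th' M1 = obs X Y S Z d th d' th' M2 \<longrightarrow>
        (\<forall>h1 h2. is_cexp (Pdo M1 d th) (\<lambda>\<omega>. \<omega> X) vspace (\<lambda>\<omega>. \<omega> Y 0) h1 \<longrightarrow>
                 is_cexp (Pdo M2 d th) (\<lambda>\<omega>. \<omega> X) vspace (\<lambda>\<omega>. \<omega> Y 0) h2 \<longrightarrow>
                 (AE x in distr (Pdo M1 d th) vspace (\<lambda>\<omega>. \<omega> X). h1 x = h2 x)))
     \<and>
     (\<forall>M. hyps Th X Yh Y S Z d th d' th' M \<longrightarrow>
        (\<forall>g h. is_cexp (Psel M S d' th') (\<lambda>\<omega>. (\<omega> X, restrict \<omega> Z)) (XZspace Z)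
                  (\<lambda>\<omega>. \<omega> Y 0) g \<longrightarrow>
               is_cexp (Pdo M d th) (\<lambda>\<omega>. \<omega> X) vspace
                  (\<lambda>\<omega>. g (\<omega> X, restrict \<omega> Z)) h \<longrightarrow>
               (\<forall>h'. is_cexp (Pdo M d th) (\<lambda>\<omega>. \<omega> X) vspace (\<lambda>\<omega>. \<omega> Y 0) h' \<longrightarrow>
                     (AE x in distr (Pdo M d th) vspace (\<lambda>\<omega>. \<omega> X). h' x = h x)) \<and>
               (integrable (Pdo M d th) (\<lambda>\<omega>. \<omega> Y 0) \<longrightarrow>
                  is_cexp (Pdo M d th) (\<lambda>\<omega>. \<omega> X) vspace (\<lambda>\<omega>. \<omega> Y 0) h)))"
proof (intro conjI allI impI)
  fix M1 M2 h1 h2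
  assume "hyps Th X Yh Y S Z d th d' th' M1" "hyps Th X Yh Y S Z d th d' th' M2"
    "obs X Y S Z d th d' th' M1 = obs X Y S Z d th d' th' M2"
    "is_cexp (Pdo M1 d th) (\<lambda>\<omega>. \<omega> X) vspace (\<lambda>\<omega>. \<omega> Y 0) h1"
    "is_cexp (Pdo M2 d th) (\<lambda>\<omega>. \<omega> X) vspace (\<lambda>\<omega>. \<omega> Y 0) h2"
  from is_cexp_identifiable[OF this(1,2) assms(2-5) this(3-5)]
  show "AE x in distr (Pdo M1 d th) vspace (\<lambda>\<omega>. \<omega> X). h1 x = h2 x" .
next
  fix M g h h'
  assume H: "hyps Th X Yh Y S Z d th d' th' M"
    and g: "is_cexp (Psel M S d' th') (\<lambda>\<omega>. (\<omega> X, restrict \<omega> Z)) (XZspace Z) (\<lambda>\<omega>. \<omega> Y 0) g"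
    and h: "is_cexp (Pdo M d th) (\<lambda>\<omega>. \<omega> X) vspace (\<lambda>\<omega>. g (\<omega> X, restrict \<omega> Z)) h"
    and h': "is_cexp (Pdo M d th) (\<lambda>\<omega>. \<omega> X) vspace (\<lambda>\<omega>. \<omega> Y 0) h'"
  have "integrable (Pdo M d th) (\<lambda>\<omega>. \<omega> Y 0)" using h' by (simp add: is_cexp_def)
  with is_cexp_adjustment[OF H assms(2-5) g h]
  show "AE x in distr (Pdo M d th) vspace (\<lambda>\<omega>. \<omega> X). h' x = h x"
    by (intro is_cexp_unique[OF h'])
next
  fix M g h
  assume "hyps Th X Yh Y S Z d th d' th' M"
    "is_cexp (Psel M S d' th') (\<lambda>\<omega>. (\<omega> X, restrict \<omega> Z)) (XZspace Z) (\<lambda>\<omega>. \<omega> Y 0) g"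
    "is_cexp (Pdo M d th) (\<lambda>\<omega>. \<omega> X) vspace (\<lambda>\<omega>. g (\<omega> X, restrict \<omega> Z)) h"
    "integrable (Pdo M d th) (\<lambda>\<omega>. \<omega> Y 0)"
  from is_cexp_adjustment[OF this(1) assms(2-5) this(2-4)]
  show "is_cexp (Pdo M d th) (\<lambda>\<omega>. \<omega> X) vspace (\<lambda>\<omega>. \<omega> Y 0) h" .
qed

end
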